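(* $|(DF)_{(y,\theta)}v|\ge4|v|$ for all $(y,\theta)\in Y$ (at which $F$ is differentiable) and all $v\in\mathbb{R}^2$.
   Context: Let $\mathbb{T}=\mathbb{R}/\mathbb{Z}$, $M=[0,1]\times\mathbb{T}$. Fix $\gamma>0$. Let $u:[0,\tfrac34]\times\mathbb{T}\to(0,\infty)$ be $C^2$ with $u(0,\theta)=c_0>0$. Define $f(x,\theta)=(f_1(x,\theta),4\theta\bmod1)$, $f_1(x,\theta)=x(1+x^\gamma u(x,\theta))$ for $0\le x\le\tfrac34$, $f_1=4x-3$ for $\tfrac34<x\le1$. Standing assumptions: $x(1+x^\gamma u)\le1$ on $[0,\tfrac34]\times\mathbb{T}$; $|(Df)_{(x,\theta)}v|\ge|v|$ on $[0,\tfrac34]\times\mathbb{T}$; $f_1(\tfrac34,\theta)>\tfrac{15}{16}$; $\sup|x\,\partial u/\partial x|$, $\sup|\partial u/\partial\theta|$ sufficiently small. Let $X_i=\{(x,\theta):0\le x\le f_1(\tfrac34,\tfrac{i+\theta}{4})\}$, $i=0,\dots,3$, $X=\bigcup_iX_i$, $Y=([\tfrac34,1]\times\mathbb{T})\cap X$, $\varphi:Y\to\mathbb{Z}^+$ the first return time of $f$ to $Y$ and $F=f^\varphi:Y\to Y$ the first return map. *)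

theory Defs
  imports "HOL-Analysis.Analysis"
begin

text \<open>We work on the universal cover: a point of M = [0,1] x T is represented by
  (x, theta) with theta real; functions on T are 1-periodic in theta.  The lift of
  theta -> 4 theta mod 1 is theta -> 4 theta.\<close>

definition f1 :: "real \<Rightarrow> (real \<times> real \<Rightarrow> real) \<Rightarrow> real \<Rightarrow> real \<Rightarrow> real" where
  "f1 \<gamma> u x \<theta> = (if x \<le> 3/4 then x * (1 + x powr \<gamma> * u (x, \<theta>)) else 4 * x - 3)"

definition fmap :: "real \<Rightarrow> (real \<times> real \<Rightarrow> real) \<Rightarrow> real \<times> real \<Rightarrow> real \<times> real" where
  "fmap \<gamma> u p = (f1 \<gamma> u (fst p) (snd p), 4 * snd p)"

definition gbranch :: "real \<Rightarrow> (real \<times> real \<Rightarrow> real) \<Rightarrow> real \<times> real \<Rightarrow> real \<times> real" where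
  "gbranch \<gamma> u p = (fst p * (1 + fst p powr \<gamma> * u p), 4 * snd p)"

definition Xset :: "real \<Rightarrow> (real \<times> real \<Rightarrow> real) \<Rightarrow> (real \<times> real) set" where
  "Xset \<gamma> u = {(x, \<theta>). 0 \<le> x \<and> (\<exists>i::nat\<in>{0..3}. x \<le> f1 \<gamma> u (3/4) ((real i + \<theta>) / 4))}"

definition Yset :: "real \<Rightarrow> (real \<times> real \<Rightarrow> real) \<Rightarrow> (real \<times> real) set" where
  "Yset \<gamma> u = ({3/4..1} \<times> UNIV) \<inter> Xset \<gamma> u"

definition ret_time :: "real \<Rightarrow> (real \<times> real \<Rightarrow> real) \<Rightarrow> real \<times> real \<Rightarrow> nat" where
  "ret_time \<gamma> u p = (LEAST n. 0 < n \<and> (fmap \<gamma> u ^^ n) p \<in> Yset \<gamma> u)"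

definition Fmap :: "real \<Rightarrow> (real \<times> real \<Rightarrow> real) \<Rightarrow> real \<times> real \<Rightarrow> real \<times> real" where
  "Fmap \<gamma> u p = (fmap \<gamma> u ^^ ret_time \<gamma> u p) p"

definition standing :: "real \<Rightarrow> real \<Rightarrow> (real \<times> real \<Rightarrow> real) \<Rightarrow> bool" where
  "standing \<gamma> \<epsilon> u \<longleftrightarrow>
     (let S = {0..3/4} \<times> (UNIV :: real set) in
      (\<forall>x \<theta>. u (x, \<theta> + 1) = u (x, \<theta>)) \<and>
      (\<forall>p\<in>S. 0 < u p) \<and>
      (\<exists>c0 > 0. \<forall>\<theta>. u (0, \<theta>) = c0) \<and>
      (\<exists>(u' :: real \<times> real \<Rightarrow> ((real \<times> real) \<Rightarrow>\<^sub>L real))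
         (u'' :: real \<times> real \<Rightarrow> ((real \<times> real) \<Rightarrow>\<^sub>L ((real \<times> real) \<Rightarrow>\<^sub>L real))).
         (\<forall>p\<in>S. (u has_derivative blinfun_apply (u' p)) (at p within S)) \<and>
         (\<forall>p\<in>S. (u' has_derivative blinfun_apply (u'' p)) (at p within S)) \<and>
         continuous_on S u'' \<and>
         (\<forall>p\<in>S. \<bar>fst p * blinfun_apply (u' p) (1, 0)\<bar> \<le> \<epsilon>) \<and>
         (\<forall>p\<in>S. \<bar>blinfun_apply (u' p) (0, 1)\<bar> \<le> \<epsilon>)) \<and>
      (\<forall>p\<in>S. fst p * (1 + fst p powr \<gamma> * u p) \<le> 1) \<and>
      (\<forall>p\<in>S. \<forall>D. (gbranch \<gamma> u has_derivative D) (at p within S) \<longrightarrow>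
                 (\<forall>v. norm v \<le> norm (D v))) \<and>
      (\<forall>\<theta>. f1 \<gamma> u (3/4) \<theta> > 15/16))"

end

theory Submission
  imports Defs
begin

(* Take p in Y with x-coordinate above 3/4 and let n be its return time.  Until
   the return the orbit avoids the line x = 3/4, so f^n is differentiable at p; since the
   theta-coordinate is just multiplied by 4, the derivative is upper triangular.  Its first factor
   is 4 times the identity (branch x -> 4x - 3) and every later factor is expanding, so
   |(Df^n) v| >= 4 |v|.  Y is closed, so the intermediate iterates of nearby points stay outside Y,
   and F agrees with f^n along every ray that enters Y at p and whose image under f^n enters Y.
   The smallness assumptions (epsilon <= 1) make the diagonal entries positive and the right edge
   of Y 1-Lipschitz in theta, which provides two independent such directions; they determine any
   derivative D of F within Y, hence D = Df^n.  On the line x = 3/4 the map F is not even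
   continuous: F(3/4, theta) = f(3/4, theta) lies beyond 15/16, whereas suitable points
   (3/4 + s, theta) with s arbitrarily small return exactly onto the line x = 3/4. *)

section \<open>Linear maps and derivatives along rays\<close>

definition upper_triangular :: "real \<Rightarrow> real \<Rightarrow> real \<Rightarrow> real \<times> real \<Rightarrow> real \<times> real" where
  "upper_triangular a b d v = (a * fst v + b * snd v, d * snd v)"

lemma linear_upper_triangular: "linear (upper_triangular a b d)"
  by (rule linearI) (auto simp: upper_triangular_def algebra_simps)

lemma upper_triangular_comp:
  "upper_triangular a b d \<circ> upper_triangular a' b' d' = upper_triangular (a * a') (a * b' + b * d') (d * d')"
  by (auto simp: upper_triangular_def fun_eq_iff algebra_simps)

lemma upper_triangular_scalar: "upper_triangular c 0 c v = c *\<^sub>R v"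
  by (simp add: upper_triangular_def prod_eq_iff)

lemma linear_eq_on_basis_real_pair:
  fixes D M :: "real \<times> real \<Rightarrow> 'a::real_vector"
  assumes D: "linear D" and M: "linear M"
    and det: "fst w1 * snd w2 - snd w1 * fst w2 \<noteq> 0"
    and "D w1 = M w1" "D w2 = M w2"
  shows "D v = M v"
proof -
  define d where "d = fst w1 * snd w2 - snd w1 * fst w2"
  define a where "a = (fst v * snd w2 - snd v * fst w2) / d"
  define b where "b = (fst w1 * snd v - snd w1 * fst v) / d"
  have "d \<noteq> 0"
    using det by (simp add: d_def)
  then have v: "v = a *\<^sub>R w1 + b *\<^sub>R w2"
    unfolding a_def b_def prod_eq_iff by (simp add: d_def divide_simps) algebra
  show ?thesis
    unfolding v linear_add[OF D] linear_add[OF M] linear_scale[OF D] linear_scale[OF M]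
    using assms(4,5) by simp
qed

lemma has_derivative_eq_along_ray:
  assumes F: "(F has_derivative D) (at p within S)" and G: "(G has_derivative M) (at p within S)"
    and "F p = G p"
    and ray: "\<forall>\<^sub>F t in at_right 0. p + t *\<^sub>R w \<in> S \<and> F (p + t *\<^sub>R w) = G (p + t *\<^sub>R w)"
  shows "D w = M w"
proof -
  obtain b :: real where "b > 0"
    and b: "\<And>t. 0 < t \<Longrightarrow> t < b \<Longrightarrow> p + t *\<^sub>R w \<in> S \<and> F (p + t *\<^sub>R w) = G (p + t *\<^sub>R w)"
    using ray unfolding eventually_at_right_field by auto
  define r where "r t = p + t *\<^sub>R w" for t :: real
  have r: "(r has_derivative (\<lambda>t. t *\<^sub>R w)) (at 0 within {0<..<b})"
    unfolding r_def by (auto intro!: derivative_eq_intros)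
  have rS: "r ` {0<..<b} \<subseteq> S" and r0: "r 0 = p"
    using b by (auto simp: r_def)
  have "(F \<circ> r has_vector_derivative D w) (at 0 within {0<..<b})"
    using has_derivative_in_compose[OF r has_derivative_subset[OF F[folded r0] rS]]
      linear_scale[OF has_derivative_linear[OF F]]
    by (simp add: has_vector_derivative_def o_def)
  moreover have "(G \<circ> r has_vector_derivative M w) (at 0 within {0<..<b})"
    using has_derivative_in_compose[OF r has_derivative_subset[OF G[folded r0] rS]]
      linear_scale[OF has_derivative_linear[OF G]]
    by (simp add: has_vector_derivative_def o_def)
  moreover have "(F \<circ> r) 0 = (G \<circ> r) 0" and "\<forall>t\<in>{0<..<b}. (F \<circ> r) t = (G \<circ> r) t"
    using b \<open>F p = G p\<close> by (auto simp: r_def)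
  moreover have "at 0 within {0<..<b} \<noteq> bot"
    using \<open>b > 0\<close> by (simp add: at_within_eq_bot_iff)
  ultimately show ?thesis
    using has_vector_derivative_cong_ev[where S="{0<..<b}" and f="F \<circ> r" and g="G \<circ> r"]
      vector_derivative_unique_within by fastforce
qed

lemma eventually_at_right_gt_of_deriv_pos:
  fixes X :: "real \<Rightarrow> real"
  assumes "(X has_real_derivative c) (at x)" "0 < c"
  shows "\<forall>\<^sub>F t in at_right x. X x < X t"
proof -
  obtain d where "0 < d" and d: "\<And>h. 0 < h \<Longrightarrow> h < d \<Longrightarrow> X x < X (x + h)"
    using DERIV_pos_inc_right[OF assms] by blast
  show ?thesis
    unfolding eventually_at_right_field
    using \<open>0 < d\<close> d[of "_ - x"] by (intro exI[of _ "x + d"]) auto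
qed

lemma has_real_derivative_components_along_ray:
  assumes "(G has_derivative M) (at p)"
  shows "((\<lambda>t. fst (G (p + t *\<^sub>R w))) has_real_derivative fst (M w)) (at 0)"
    and "((\<lambda>t. snd (G (p + t *\<^sub>R w))) has_real_derivative snd (M w)) (at 0)"
proof -
  have r: "((\<lambda>t. p + t *\<^sub>R w) has_derivative (\<lambda>t. t *\<^sub>R w)) (at 0)"
    by (auto intro!: derivative_eq_intros)
  have "(G has_derivative M) (at (p + 0 *\<^sub>R w))"
    using assms by simp
  from has_derivative_compose[OF r this]
  have "((\<lambda>t. G (p + t *\<^sub>R w)) has_derivative (\<lambda>t. M (t *\<^sub>R w))) (at 0)" .
  then have "((\<lambda>t. G (p + t *\<^sub>R w)) has_derivative (\<lambda>t. t *\<^sub>R M w)) (at 0)"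
    by (simp add: linear_scale[OF has_derivative_linear[OF assms]])
  from has_derivative_fst[OF this] has_derivative_snd[OF this]
  show "((\<lambda>t. fst (G (p + t *\<^sub>R w))) has_real_derivative fst (M w)) (at 0)"
    and "((\<lambda>t. snd (G (p + t *\<^sub>R w))) has_real_derivative snd (M w)) (at 0)"
    by (simp_all add: has_field_derivative_def mult_commute_abs)
qed

text \<open>A direction \<open>v\<close> at \<open>z \<in> Y\<close> such that the ray from \<open>z\<close> stays in \<open>Y\<close> for a short time
  (lemma \<open>eventually_in_Y_along_ray\<close>): \<open>3/4\<close> is the left edge of \<open>Y\<close> and \<open>15/16\<close> a lower
  bound for its right edge, which moves by at most \<open>|\<Delta>\<theta>|\<close>.\<close>

definition inward :: "real \<times> real \<Rightarrow> real \<times> real \<Rightarrow> bool" where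
  "inward z v \<longleftrightarrow> (3/4 < fst z \<or> 0 < fst v) \<and> (fst z \<le> 15/16 \<or> fst v + \<bar>snd v\<bar> < 0)"

lemma inward_basis:
  assumes "0 < a" "3/4 < fst p" "3/4 \<le> fst y" "fst y = 3/4 \<Longrightarrow> fst p \<le> 15/16"
  obtains w1 w2 where "inward p w1" "inward p w2"
    and "inward y (upper_triangular a b d w1)" "inward y (upper_triangular a b d w2)"
    and "fst w1 * snd w2 - snd w1 * fst w2 \<noteq> 0"
proof (cases "fst y = 3/4")
  case True
  define s where "s = (\<bar>b\<bar> + 1) / a"
  have "a * s = \<bar>b\<bar> + 1" "0 < s"
    using \<open>0 < a\<close> by (simp_all add: s_def)
  then show ?thesis
    using that[of "(s, 1)" "(s, -1)"] assms True abs_ge_self[of b] abs_ge_minus_self[of b]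
    by (simp add: inward_def upper_triangular_def)
next
  case False
  define s where "s = (\<bar>b\<bar> + \<bar>d\<bar> + 1) / a + 1"
  have "a * s = \<bar>b\<bar> + \<bar>d\<bar> + 1 + a" "1 < s"
    using \<open>0 < a\<close> by (simp_all add: s_def field_simps add_pos_nonneg)
  then show ?thesis
    using that[of "(-s, 1)" "(-s, -1)"] assms False abs_ge_self[of b] abs_ge_minus_self[of b]
    by (simp add: inward_def upper_triangular_def)
qed

abbreviation left_part :: "(real \<times> real) set" where
  "left_part \<equiv> {0..3/4} \<times> UNIV"

text \<open>The part of \<open>standing\<close> that the proof uses, with the derivative \<open>u'\<close> of \<open>u\<close> as a
  parameter and \<open>\<epsilon> \<le> 1\<close>.\<close>

locale intermittent_setting =
  fixes \<gamma> \<epsilon> :: real and u :: "real \<times> real \<Rightarrow> real"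
    and u' :: "real \<times> real \<Rightarrow> (real \<times> real) \<Rightarrow>\<^sub>L real"
  assumes gamma_pos: "0 < \<gamma>" and eps_le_1: "\<epsilon> \<le> 1"
    and u_periodic: "u (x, \<theta> + 1) = u (x, \<theta>)"
    and u_pos: "p \<in> left_part \<Longrightarrow> 0 < u p"
    and u_has_derivative:
      "p \<in> left_part \<Longrightarrow> (u has_derivative blinfun_apply (u' p)) (at p within left_part)"
    and x_du_dx_bound: "p \<in> left_part \<Longrightarrow> \<bar>fst p * blinfun_apply (u' p) (1, 0)\<bar> \<le> \<epsilon>"
    and du_d\<theta>_bound: "p \<in> left_part \<Longrightarrow> \<bar>blinfun_apply (u' p) (0, 1)\<bar> \<le> \<epsilon>"
    and branch_le_1: "p \<in> left_part \<Longrightarrow> fst p * (1 + fst p powr \<gamma> * u p) \<le> 1"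
    and branch_expanding:
      "p \<in> left_part \<Longrightarrow> (gbranch \<gamma> u has_derivative D) (at p within left_part) \<Longrightarrow>
        norm v \<le> norm (D v)"
    and edge_gt: "15/16 < f1 \<gamma> u (3/4) \<theta>"
begin

abbreviation "f \<equiv> fmap \<gamma> u"
abbreviation "F \<equiv> Fmap \<gamma> u"
abbreviation "Y \<equiv> Yset \<gamma> u"
abbreviation "edge \<equiv> f1 \<gamma> u (3/4)"

lemma edge_eq: "edge \<theta> = 3/4 * (1 + (3/4) powr \<gamma> * u (3/4, \<theta>))"
  by (simp add: f1_def)

lemma edge_le_1: "edge \<theta> \<le> 1"
  using branch_le_1[of "(3/4, \<theta>)"] by (simp add: edge_eq)

lemma lipschitz_edge: "1-lipschitz_on UNIV edge"
proof (rule bounded_derivative_imp_lipschitz)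
  define c where "c = 3/4 * (3/4) powr \<gamma>"
  have c: "0 \<le> c" "c \<le> 1"
    using powr_le1[of \<gamma> "3/4"] gamma_pos by (auto simp: c_def)
  fix \<theta> :: real
  have "((\<lambda>\<theta>. u (3/4, \<theta>)) has_derivative (\<lambda>h. blinfun_apply (u' (3/4, \<theta>)) (0, h))) (at \<theta> within UNIV)"
    by (rule has_derivative_in_compose2[of left_part u "\<lambda>p. blinfun_apply (u' p)"])
      (auto intro!: u_has_derivative derivative_eq_intros)
  then show "(edge has_derivative (\<lambda>h. c * blinfun_apply (u' (3/4, \<theta>)) (0, h))) (at \<theta> within UNIV)"
    unfolding edge_eq c_def by (auto intro!: derivative_eq_intros)
  have "c * \<bar>blinfun_apply (u' (3/4, \<theta>)) (0, h)\<bar> \<le> \<bar>h\<bar>" for h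
  proof -
    define B where "B = blinfun_apply (u' (3/4, \<theta>)) (0, 1)"
    have "c * \<bar>B\<bar> \<le> 1"
      using c du_d\<theta>_bound[of "(3/4, \<theta>)"] eps_le_1 by (intro mult_le_one) (auto simp: B_def)
    then have "\<bar>h\<bar> * (c * \<bar>B\<bar>) \<le> \<bar>h\<bar>"
      by (simp add: mult_left_le)
    moreover have "blinfun_apply (u' (3/4, \<theta>)) (0, h) = h * B"
      using blinfun.scaleR_right[of "u' (3/4, \<theta>)" h "(0, 1)"] by (simp add: B_def)
    ultimately show ?thesis
      by (simp add: abs_mult mult.left_commute)
  qed
  then show "onorm (\<lambda>h. c * blinfun_apply (u' (3/4, \<theta>)) (0, h)) \<le> 1"
    using c by (intro onorm_bound) (auto simp: abs_mult)
qed auto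

lemma continuous_on_edge: "continuous_on UNIV edge"
  by (rule lipschitz_on_continuous_on[OF lipschitz_edge])

lemma Y_iff: "q \<in> Y \<longleftrightarrow> 3/4 \<le> fst q \<and> (\<exists>i\<in>{0..3::nat}. fst q \<le> edge ((real i + snd q) / 4))"
proof -
  have "q \<in> Y \<longleftrightarrow> fst q \<in> {3/4..1} \<and> (\<exists>i\<in>{0..3::nat}. fst q \<le> edge ((real i + snd q) / 4))"
    by (cases q) (auto simp: Yset_def Xset_def)
  then show ?thesis
    using edge_le_1 order_trans by auto
qed

lemma closed_Y: "closed Y"
proof -
  have "Y = {q. 3/4 \<le> fst q} \<inter> (\<Union>i\<in>{0..3::nat}. {q. fst q \<le> edge ((real i + snd q) / 4)})"
    by (auto simp: Y_iff Bex_def)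
  also have "closed \<dots>"
    using continuous_on_edge
    by (intro closed_Int closed_UN ballI closed_Collect_le)
      (auto intro!: continuous_intros continuous_on_compose2[OF continuous_on_edge])
  finally show ?thesis .
qed

lemma line_in_Y: "fst q = 3/4 \<Longrightarrow> q \<in> Y"
  using edge_gt[of "snd q / 4"] by (force simp: Y_iff)

lemma fmap_right: "3/4 < fst z \<Longrightarrow> f z = (4 * fst z - 3, 4 * snd z)"
  by (simp add: fmap_def f1_def)

lemma fmap_left: "fst z \<le> 3/4 \<Longrightarrow> f z = gbranch \<gamma> u z"
  by (simp add: fmap_def f1_def gbranch_def)

lemma fst_fmap_pos: "0 < fst z \<Longrightarrow> 0 < fst (f z)"
  using u_pos[of z] by (cases z) (auto simp: fmap_def f1_def add_pos_nonneg)

lemma fst_funpow_fmap_pos: "0 < fst z \<Longrightarrow> 0 < fst ((f ^^ k) z)"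
  by (induction k) (auto intro: fst_fmap_pos)

lemma fst_fmap_right_if_notin_Y:
  assumes "3/4 < fst z" "z \<notin> Y"
  shows "3/4 < fst (f z)"
proof -
  have "15/16 < fst z"
    using assms edge_gt[of "(real 0 + snd z) / 4"] by (force simp: Y_iff)
  then show ?thesis
    using fmap_right assms(1) by simp
qed

section \<open>Derivatives of the iterates of \<open>f\<close>\<close>

text \<open>This is where \<open>\<epsilon> \<le> 1\<close> enters for \<open>\<partial>u/\<partial>x\<close>: the diagonal entry is at least \<open>1 - x powr \<gamma>\<close>.\<close>

lemma gbranch_diagonal_pos:
  assumes z: "z \<in> left_part" "fst z < 3/4"
  shows "0 < 1 + (1 + \<gamma>) * fst z powr \<gamma> * u z + fst z powr \<gamma> * (fst z * blinfun_apply (u' z) (1, 0))"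
proof -
  have "fst z powr \<gamma> < 1"
    using z gamma_pos powr_less_mono2[of \<gamma> "fst z" 1] by auto
  moreover have "- 1 \<le> fst z * blinfun_apply (u' z) (1, 0)"
    using x_du_dx_bound[OF z(1)] eps_le_1 by (simp add: abs_le_iff)
  then have "- (fst z powr \<gamma>) \<le> fst z powr \<gamma> * (fst z * blinfun_apply (u' z) (1, 0))"
    using mult_left_mono[of "-1" _ "fst z powr \<gamma>"] by simp
  moreover have "0 \<le> (1 + \<gamma>) * fst z powr \<gamma> * u z"
    using gamma_pos u_pos[OF z(1)] by simp
  ultimately show ?thesis
    by linarith
qed

lemma has_derivative_gbranch:
  assumes z: "0 < fst z" "fst z < 3/4"
  obtains a b where "0 < a" and "(gbranch \<gamma> u has_derivative upper_triangular a b 4) (at z)"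
    and "\<And>v. norm v \<le> norm (upper_triangular a b 4 v)"
proof -
  define x where "x = fst z"
  have zS: "z \<in> left_part"
    using z by (cases z) auto
  have "(u has_derivative blinfun_apply (u' z)) (at z within {q. 0 < fst q \<and> fst q < 3/4})"
    by (rule has_derivative_subset[OF u_has_derivative[OF zS]]) auto
  then have du: "(u has_derivative blinfun_apply (u' z)) (at z)"
    using z by (subst (asm) at_within_open) (auto intro!: open_Collect_conj open_Collect_less continuous_intros)
  define a where "a = 1 + (1 + \<gamma>) * x powr \<gamma> * u z + x powr \<gamma> * (x * blinfun_apply (u' z) (1, 0))"
  define b where "b = x * x powr \<gamma> * blinfun_apply (u' z) (0, 1)"
  have "(gbranch \<gamma> u has_derivative (\<lambda>h. (fst h * (1 + x powr \<gamma> * u z)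
      + x * (x powr \<gamma> * (0 * ln x + fst h * \<gamma> / x) * u z + x powr \<gamma> * blinfun_apply (u' z) h), 4 * snd h))) (at z)"
    unfolding gbranch_def x_def using z by (auto intro!: derivative_eq_intros du)
  also have "(\<lambda>h. (fst h * (1 + x powr \<gamma> * u z)
      + x * (x powr \<gamma> * (0 * ln x + fst h * \<gamma> / x) * u z + x powr \<gamma> * blinfun_apply (u' z) h), 4 * snd h))
    = upper_triangular a b 4"
  proof
    fix h :: "real \<times> real"
    have "blinfun_apply (u' z) h = fst h * blinfun_apply (u' z) (1, 0) + snd h * blinfun_apply (u' z) (0, 1)"
      using blinfun.add_right[of "u' z" "(fst h, 0)" "(0, snd h)"]
        blinfun.scaleR_right[of "u' z" "fst h" "(1, 0)"] blinfun.scaleR_right[of "u' z" "snd h" "(0, 1)"]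
      by simp
    then show "(fst h * (1 + x powr \<gamma> * u z)
      + x * (x powr \<gamma> * (0 * ln x + fst h * \<gamma> / x) * u z + x powr \<gamma> * blinfun_apply (u' z) h), 4 * snd h)
      = upper_triangular a b 4 h"
      using z by (simp add: upper_triangular_def a_def b_def x_def field_simps)
  qed
  finally have D: "(gbranch \<gamma> u has_derivative upper_triangular a b 4) (at z)" .
  moreover have "0 < a"
    unfolding a_def x_def using gbranch_diagonal_pos[OF zS z(2)] .
  ultimately show ?thesis
    using that branch_expanding[OF zS has_derivative_at_withinI[OF D]] by blast
qed

lemma has_derivative_fmap_right: "3/4 < fst z \<Longrightarrow> (f has_derivative upper_triangular 4 0 4) (at z)"
  by (rule has_derivative_transform_within_open[where f="\<lambda>q. (4 * fst q - 3, 4 * snd q)" and s="{q. 3/4 < fst q}"])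
    (auto simp: fmap_right upper_triangular_def intro!: derivative_eq_intros open_Collect_less continuous_intros)

lemma has_derivative_fmap:
  assumes "0 < fst z" "fst z \<noteq> 3/4"
  obtains a b where "0 < a" and "(f has_derivative upper_triangular a b 4) (at z)"
    and "\<And>v. norm v \<le> norm (upper_triangular a b 4 v)"
proof (cases "3/4 < fst z")
  case True
  then show ?thesis
    using that[of 4 0] has_derivative_fmap_right by (simp add: upper_triangular_scalar)
next
  case False
  then have "fst z < 3/4"
    using assms by simp
  then obtain a b where "0 < a" and D: "(gbranch \<gamma> u has_derivative upper_triangular a b 4) (at z)"
    and "\<And>v. norm v \<le> norm (upper_triangular a b 4 v)"
    using has_derivative_gbranch assms(1) by blast
  moreover have "(f has_derivative upper_triangular a b 4) (at z)"
    by (rule has_derivative_transform_within_open[OF D, of "{q. fst q < 3/4}"])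
      (use \<open>fst z < 3/4\<close> in \<open>auto simp: fmap_left intro!: open_Collect_less continuous_intros\<close>)
  ultimately show ?thesis
    using that by blast
qed

lemma has_derivative_funpow_fmap:
  assumes p: "3/4 < fst p" and "0 < n" and before: "\<And>k. 0 < k \<Longrightarrow> k < n \<Longrightarrow> (f ^^ k) p \<notin> Y"
  shows "\<exists>a b. 0 < a \<and> ((f ^^ n) has_derivative upper_triangular a b (4 ^ n)) (at p)
    \<and> (\<forall>v. 4 * norm v \<le> norm (upper_triangular a b (4 ^ n) v))"
  using \<open>0 < n\<close> before
proof (induction n rule: nat_induct_non_zero)
  case 1
  have "((f ^^ 1) has_derivative upper_triangular 4 0 (4 ^ 1)) (at p)"
    using has_derivative_fmap_right[OF p] by simp
  moreover have "\<forall>v. 4 * norm v \<le> norm (upper_triangular 4 0 (4 ^ 1) v)"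
    by (simp add: upper_triangular_scalar)
  ultimately show ?case
    using zero_less_numeral by blast
next
  case (Suc n)
  then obtain a b where "0 < a" and D: "((f ^^ n) has_derivative upper_triangular a b (4 ^ n)) (at p)"
    and N: "\<And>v. 4 * norm v \<le> norm (upper_triangular a b (4 ^ n) v)"
    by auto
  define z where "z = (f ^^ n) p"
  have "0 < fst z"
    using p fst_funpow_fmap_pos by (simp add: z_def)
  moreover have "fst z \<noteq> 3/4"
    using line_in_Y[of z] Suc.prems[of n] \<open>0 < n\<close> by (auto simp: z_def)
  ultimately obtain a' b' where "0 < a'" and D': "(f has_derivative upper_triangular a' b' 4) (at z)"
    and N': "\<And>v. norm v \<le> norm (upper_triangular a' b' 4 v)"
    using has_derivative_fmap by blast
  have comp: "upper_triangular a' b' 4 \<circ> upper_triangular a b (4 ^ n)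
    = upper_triangular (a' * a) (a' * b + b' * 4 ^ n) (4 ^ Suc n)"
    by (simp add: upper_triangular_comp)
  have "((f ^^ Suc n) has_derivative upper_triangular (a' * a) (a' * b + b' * 4 ^ n) (4 ^ Suc n)) (at p)"
    using has_derivative_compose[OF D D'[unfolded z_def]] unfolding comp[symmetric] by (simp add: o_def)
  moreover have "4 * norm v \<le> norm (upper_triangular (a' * a) (a' * b + b' * 4 ^ n) (4 ^ Suc n) v)" for v
    using order_trans[OF N N'] unfolding comp[symmetric] by simp
  moreover have "0 < a' * a"
    using \<open>0 < a\<close> \<open>0 < a'\<close> by simp
  ultimately show ?case
    by blast
qed

section \<open>Rays entering \<open>Y\<close> and the return map near points with \<open>x > 3/4\<close>\<close>

lemma below_edge_if_moved_left:
  assumes "x \<le> edge ((real i + \<theta>) / 4)" "x' + \<bar>\<theta>' - \<theta>\<bar> \<le> x"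
  shows "x' \<le> edge ((real i + \<theta>') / 4)"
proof -
  define d where "d = \<bar>\<theta>' - \<theta>\<bar>"
  have "dist (edge ((real i + \<theta>) / 4)) (edge ((real i + \<theta>') / 4)) \<le> dist ((real i + \<theta>) / 4) ((real i + \<theta>') / 4)"
    using lipschitz_onD[OF lipschitz_edge] by simp
  also have "\<dots> = d / 4"
    by (simp add: d_def dist_real_def abs_minus_commute flip: diff_divide_distrib)
  finally have "edge ((real i + \<theta>) / 4) \<le> edge ((real i + \<theta>') / 4) + d / 4"
    unfolding dist_real_def abs_le_iff by linarith
  moreover have "0 \<le> d"
    by (simp add: d_def)
  ultimately show ?thesis
    using assms unfolding d_def[symmetric] by linarith
qed

lemma eventually_in_Y_along_ray:
  assumes G: "(G has_derivative M) (at p)" and "G p \<in> Y" and "inward (G p) (M w)"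
  shows "\<forall>\<^sub>F t in at_right 0. G (p + t *\<^sub>R w) \<in> Y"
proof -
  define X where "X t = fst (G (p + t *\<^sub>R w))" for t
  define T where "T t = snd (G (p + t *\<^sub>R w))" for t
  have X: "(X has_real_derivative fst (M w)) (at 0)" and T: "(T has_real_derivative snd (M w)) (at 0)"
    unfolding X_def T_def by (rule has_real_derivative_components_along_ray[OF G])+
  have X0: "X 0 = fst (G p)" and T0: "T 0 = snd (G p)"
    by (simp_all add: X_def T_def)
  have "(X \<longlongrightarrow> X 0) (at_right 0)" and "(T \<longlongrightarrow> T 0) (at_right 0)"
    using DERIV_isCont[OF X] DERIV_isCont[OF T] by (simp_all add: isCont_def filterlim_at_split)
  note X_lim = this(1) and T_lim = this(2)
  obtain i where i: "i \<in> {0..3::nat}" "X 0 \<le> edge ((real i + T 0) / 4)" and "3/4 \<le> X 0"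
    using \<open>G p \<in> Y\<close> by (auto simp: Y_iff X0 T0)
  have right: "\<forall>\<^sub>F t in at_right 0. 3/4 \<le> X t"
  proof (cases "3/4 < X 0")
    case True
    from order_tendstoD(1)[OF X_lim this] show ?thesis
      by eventually_elim simp
  next
    case False
    then have "0 < fst (M w)"
      using \<open>inward (G p) (M w)\<close> by (simp add: inward_def X0)
    from eventually_at_right_gt_of_deriv_pos[OF X this] show ?thesis
      by eventually_elim (use \<open>3/4 \<le> X 0\<close> in simp)
  qed
  have below: "\<forall>\<^sub>F t in at_right 0. \<exists>i\<in>{0..3::nat}. X t \<le> edge ((real i + T t) / 4)"
  proof (cases "X 0 \<le> 15/16")
    case True
    have "((\<lambda>t. X t - edge (T t / 4)) \<longlongrightarrow> X 0 - edge (T 0 / 4)) (at_right 0)"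
      using continuous_on_edge X_lim T_lim
      by (auto intro!: tendsto_intros continuous_on_tendsto_compose[of UNIV edge])
    moreover have "X 0 - edge (T 0 / 4) < 0"
      using True edge_gt[of "T 0 / 4"] by simp
    ultimately have "\<forall>\<^sub>F t in at_right 0. X t - edge (T t / 4) < 0"
      by (rule order_tendstoD(2))
    then show ?thesis
      by eventually_elim (auto intro!: bexI[of _ 0])
  next
    case False
    then have neg: "fst (M w) + snd (M w) < 0" "fst (M w) - snd (M w) < 0"
      using \<open>inward (G p) (M w)\<close> by (auto simp: inward_def X0)
    have "\<forall>\<^sub>F t in at_right 0. - (X 0 + T 0) < - (X t + T t)"
      using eventually_at_right_gt_of_deriv_pos[OF DERIV_minus[OF DERIV_add[OF X T]]] neg by simp
    moreover have "\<forall>\<^sub>F t in at_right 0. - (X 0 - T 0) < - (X t - T t)"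
      using eventually_at_right_gt_of_deriv_pos[OF DERIV_minus[OF DERIV_diff[OF X T]]] neg by simp
    ultimately show ?thesis
    proof eventually_elim
      case (elim t)
      then have "X t + \<bar>T t - T 0\<bar> \<le> X 0"
        by linarith
      then show ?case
        using below_edge_if_moved_left[OF i(2)] i(1) by blast
    qed
  qed
  from right below show ?thesis
    by eventually_elim (auto simp: Y_iff X_def T_def)
qed

lemma first_return:
  assumes "\<exists>n>0. (f ^^ n) p \<in> Y"
  shows "0 < ret_time \<gamma> u p" and "(f ^^ ret_time \<gamma> u p) p \<in> Y"
    and "\<And>k. 0 < k \<Longrightarrow> k < ret_time \<gamma> u p \<Longrightarrow> (f ^^ k) p \<notin> Y"
proof -
  show "0 < ret_time \<gamma> u p" and "(f ^^ ret_time \<gamma> u p) p \<in> Y"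
    using LeastI_ex[OF assms] by (simp_all add: ret_time_def)
  show "(f ^^ k) p \<notin> Y" if "0 < k" "k < ret_time \<gamma> u p" for k
    using not_less_Least[of k "\<lambda>n. 0 < n \<and> (f ^^ n) p \<in> Y"] that by (simp add: ret_time_def)
qed

lemma ret_time_eqI:
  assumes "0 < n" "(f ^^ n) p \<in> Y" "\<And>k. 0 < k \<Longrightarrow> k < n \<Longrightarrow> (f ^^ k) p \<notin> Y"
  shows "ret_time \<gamma> u p = n"
  unfolding ret_time_def
  by (rule Least_equality) (use assms not_less in auto)

lemma orbit_right_until_return:
  assumes "3/4 < fst (f p)" and before: "\<And>k. 0 < k \<Longrightarrow> k < n \<Longrightarrow> (f ^^ k) p \<notin> Y"
  shows "0 < k \<Longrightarrow> k \<le> n \<Longrightarrow> 3/4 < fst ((f ^^ k) p)"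
proof (induction k rule: nat_induct_non_zero)
  case (Suc k)
  then show ?case
    using fst_fmap_right_if_notin_Y before[of k] by simp
qed (use assms in simp)

lemma Fmap_eq_funpow_along_ray:
  assumes p: "3/4 < fst p" and ret: "\<exists>n>0. (f ^^ n) p \<in> Y" and n: "n = ret_time \<gamma> u p"
    and start: "\<forall>\<^sub>F t in at_right 0. p + t *\<^sub>R w \<in> Y"
    and return: "\<forall>\<^sub>F t in at_right 0. (f ^^ n) (p + t *\<^sub>R w) \<in> Y"
  shows "\<forall>\<^sub>F t in at_right 0. p + t *\<^sub>R w \<in> Y \<and> F (p + t *\<^sub>R w) = (f ^^ n) (p + t *\<^sub>R w)"
proof -
  note before = first_return(3)[OF ret, folded n]
  have ray: "((\<lambda>t. p + t *\<^sub>R w) \<longlongrightarrow> p) (at_right 0)"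
    by (auto intro!: tendsto_eq_intros)
  have "\<forall>\<^sub>F t in at_right 0. (f ^^ k) (p + t *\<^sub>R w) \<notin> Y" if k: "k \<in> {0<..<n}" for k
  proof -
    obtain a b where "((f ^^ k) has_derivative upper_triangular a b (4 ^ k)) (at p)"
      using has_derivative_funpow_fmap[OF p, of k] before k by auto
    then have "((\<lambda>t. (f ^^ k) (p + t *\<^sub>R w)) \<longlongrightarrow> (f ^^ k) p) (at_right 0)"
      using isCont_tendsto_compose[OF has_derivative_continuous ray] by blast
    moreover have "(f ^^ k) p \<in> - Y"
      using before k by simp
    ultimately show ?thesis
      using closed_Y by (auto simp: closed_def dest: topological_tendstoD)
  qed
  then have "\<forall>\<^sub>F t in at_right 0. \<forall>k\<in>{0<..<n}. (f ^^ k) (p + t *\<^sub>R w) \<notin> Y"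
    by (intro eventually_ball_finite) auto
  with start return show ?thesis
  proof eventually_elim
    case (elim t)
    then have "ret_time \<gamma> u (p + t *\<^sub>R w) = n"
      using first_return(1)[OF ret] n by (intro ret_time_eqI) auto
    with elim show ?case
      by (simp add: Fmap_def)
  qed
qed

lemma Fmap_derivative_eq_on_inward:
  assumes p: "3/4 < fst p" "p \<in> Y" and ret: "\<exists>n>0. (f ^^ n) p \<in> Y" and n: "n = ret_time \<gamma> u p"
    and D: "(F has_derivative D) (at p within Y)" and M: "((f ^^ n) has_derivative M) (at p)"
    and "inward p w" "inward ((f ^^ n) p) (M w)"
  shows "D w = M w"
proof (rule has_derivative_eq_along_ray[OF D has_derivative_at_withinI[OF M]])
  show "F p = (f ^^ n) p"
    by (simp add: Fmap_def n)
  have "\<forall>\<^sub>F t in at_right 0. id (p + t *\<^sub>R w) \<in> Y"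
    using \<open>inward p w\<close> p by (intro eventually_in_Y_along_ray[of id id]) auto
  moreover have "\<forall>\<^sub>F t in at_right 0. (f ^^ n) (p + t *\<^sub>R w) \<in> Y"
    using M first_return(2)[OF ret] \<open>inward ((f ^^ n) p) (M w)\<close> n
    by (intro eventually_in_Y_along_ray) auto
  ultimately show "\<forall>\<^sub>F t in at_right 0. p + t *\<^sub>R w \<in> Y \<and> F (p + t *\<^sub>R w) = (f ^^ n) (p + t *\<^sub>R w)"
    using Fmap_eq_funpow_along_ray[OF p(1) ret n] by simp
qed

lemma Fmap_expanding_right:
  assumes p: "3/4 < fst p" "p \<in> Y" and ret: "\<exists>n>0. (f ^^ n) p \<in> Y"
    and D: "(F has_derivative D) (at p within Y)"
  shows "4 * norm v \<le> norm (D v)"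
proof -
  define n where "n = ret_time \<gamma> u p"
  define y where "y = (f ^^ n) p"
  obtain a b where "0 < a" and M: "((f ^^ n) has_derivative upper_triangular a b (4 ^ n)) (at p)"
    and expanding: "\<forall>v. 4 * norm v \<le> norm (upper_triangular a b (4 ^ n) v)"
    using has_derivative_funpow_fmap[OF p(1) first_return(1,3)[OF ret]] by (auto simp: n_def)
  have "3/4 \<le> fst y"
    using first_return(2)[OF ret] by (simp add: y_def n_def Y_iff)
  moreover have "fst p \<le> 15/16" if "fst y = 3/4"
  proof (rule ccontr)
    assume "\<not> fst p \<le> 15/16"
    then have "3/4 < fst (f p)"
      using fmap_right[OF p(1)] by simp
    then have "3/4 < fst y"
      using orbit_right_until_return[of p n n] first_return[OF ret] by (simp add: y_def n_def)
    with that show False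
      by simp
  qed
  ultimately obtain w1 w2 where "inward p w1" "inward p w2"
    and "inward y (upper_triangular a b (4 ^ n) w1)" "inward y (upper_triangular a b (4 ^ n) w2)"
    and det: "fst w1 * snd w2 - snd w1 * fst w2 \<noteq> 0"
    using inward_basis[OF \<open>0 < a\<close> p(1)] by blast
  then have "D w1 = upper_triangular a b (4 ^ n) w1" "D w2 = upper_triangular a b (4 ^ n) w2"
    using Fmap_derivative_eq_on_inward[OF p ret n_def D M] by (simp_all add: y_def)
  then have "D v = upper_triangular a b (4 ^ n) v"
    using linear_eq_on_basis_real_pair[OF has_derivative_linear[OF D] linear_upper_triangular det]
    by blast
  with expanding show ?thesis
    by metis
qed

section \<open>Discontinuity of the return map on the line \<open>x = 3/4\<close>\<close>

lemma continuous_on_u: "continuous_on left_part u"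
  using has_derivative_continuous_on[of left_part u "\<lambda>p. blinfun_apply (u' p)"] u_has_derivative
  by blast

lemma u_periodic_int: "u (x, \<theta> + of_int k) = u (x, \<theta>)"
proof (induction k rule: int_induct[where k = 0])
  case (step1 i)
  then show ?case
    using u_periodic[of x "\<theta> + of_int i"] by (simp add: add.assoc)
next
  case (step2 i)
  then show ?case
    using u_periodic[of x "\<theta> + of_int (i - 1)"] by (simp add: add.assoc)
qed simp

lemma u_lower_bound:
  obtains m where "0 < m" and "\<And>x \<theta>. 0 \<le> x \<Longrightarrow> x \<le> 3/4 \<Longrightarrow> m \<le> u (x, \<theta>)"
proof -
  define K where "K = {0..3/4::real} \<times> {0..1::real}"
  have "continuous_on K u"
    by (rule continuous_on_subset[OF continuous_on_u]) (auto simp: K_def)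
  moreover have "compact K" "K \<noteq> {}"
    by (simp_all add: K_def compact_Times)
  ultimately obtain q where "q \<in> K" and q: "\<And>p. p \<in> K \<Longrightarrow> u q \<le> u p"
    using continuous_attains_inf[of K u] by blast
  have "u q \<le> u (x, \<theta>)" if "0 \<le> x" "x \<le> 3/4" for x \<theta>
  proof -
    have "(x, frac \<theta>) \<in> K"
      using that frac_ge_0[of \<theta>] frac_lt_1[of \<theta>] by (auto simp: K_def)
    then have "u q \<le> u (x, frac \<theta>)"
      by (rule q)
    also have "u (x, frac \<theta>) = u (x, frac \<theta> + of_int \<lfloor>\<theta>\<rfloor>)"
      by (rule u_periodic_int[symmetric])
    finally show ?thesis
      by (simp add: frac_def)
  qed
  moreover have "0 < u q"
    using \<open>q \<in> K\<close> u_pos[of q] by (auto simp: K_def)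
  ultimately show ?thesis
    using that by blast
qed

text \<open>The first coordinates of the orbit of \<open>(3/4 + t, \<theta>)\<close> while it stays left of \<open>3/4\<close>;
  clamping at \<open>3/4\<close> keeps \<open>u\<close> inside its domain, so that every iterate is continuous in \<open>t\<close>.\<close>

primrec xorbit :: "real \<Rightarrow> nat \<Rightarrow> real \<Rightarrow> real" where
  "xorbit \<theta> 0 t = 4 * t"
| "xorbit \<theta> (Suc k) t = fst (gbranch \<gamma> u (min (xorbit \<theta> k t) (3/4), 4 ^ Suc k * \<theta>))"

lemma xorbit_nonneg: "0 \<le> t \<Longrightarrow> 0 \<le> xorbit \<theta> k t"
proof (induction k)
  case (Suc k)
  define x where "x = min (xorbit \<theta> k t) (3/4)"
  have "0 \<le> x" "x \<le> 3/4"
    using Suc by (auto simp: x_def)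
  moreover have "0 < u (x, 4 ^ Suc k * \<theta>)"
    using calculation by (intro u_pos) auto
  ultimately show ?case
    by (simp add: gbranch_def flip: x_def)
qed simp

lemma xorbit_zero: "xorbit \<theta> k 0 = 0"
  by (induction k) (simp_all add: gbranch_def)

lemma continuous_on_xorbit: "continuous_on {0..} (xorbit \<theta> k)"
proof (induction k)
  case 0
  have "xorbit \<theta> 0 = (*) 4"
    by (rule ext) simp
  then show ?case
    by (simp only:) (intro continuous_intros)
next
  case (Suc k)
  define x where "x t = min (xorbit \<theta> k t) (3/4)" for t
  have "continuous_on {0..} x"
    unfolding x_def by (intro continuous_on_min Suc.IH continuous_on_const)
  moreover have "x t \<in> {0..3/4}" if "t \<in> {0..}" for t
    using xorbit_nonneg[of t \<theta> k] that by (simp add: x_def)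
  ultimately have x: "continuous_on {0..} x" "\<And>t. t \<in> {0..} \<Longrightarrow> x t \<in> {0..3/4}"
    by blast+
  have "continuous_on {0..} (\<lambda>t. u (x t, 4 ^ Suc k * \<theta>))"
    by (rule continuous_on_compose2[OF continuous_on_u continuous_on_Pair[OF x(1) continuous_on_const]])
      (use x(2) in \<open>auto simp: image_subset_iff\<close>)
  moreover have "continuous_on {0..} (\<lambda>t. x t powr \<gamma>)"
    using x gamma_pos by (intro continuous_on_powr' continuous_on_const) auto
  ultimately have "continuous_on {0..} (\<lambda>t. x t * (1 + x t powr \<gamma> * u (x t, 4 ^ Suc k * \<theta>)))"
    using x by (intro continuous_on_mult continuous_on_add continuous_on_const)
  then show ?case
    by (rule continuous_on_eq) (simp add: gbranch_def x_def)
qed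

lemma xorbit_reaches_line:
  assumes "0 < t"
  shows "\<exists>k. 3/4 \<le> xorbit \<theta> k t"
proof (rule ccontr)
  assume "\<nexists>k. 3/4 \<le> xorbit \<theta> k t"
  then have below: "xorbit \<theta> k t < 3/4" for k
    by (meson not_le)
  obtain m where "0 < m" and m: "\<And>x \<theta>. 0 \<le> x \<Longrightarrow> x \<le> 3/4 \<Longrightarrow> m \<le> u (x, \<theta>)"
    using u_lower_bound by blast
  \<comment> \<open>Each step adds at least \<open>c\<close>, because \<open>x \<ge> 4 t\<close> along the orbit.\<close>
  define c where "c = 4 * t * ((4 * t) powr \<gamma> * m)"
  have "0 < c"
    using \<open>0 < t\<close> \<open>0 < m\<close> by (simp add: c_def)
  have "4 * t + real k * c \<le> xorbit \<theta> k t" for k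
  proof (induction k)
    case (Suc k)
    define x where "x = xorbit \<theta> k t"
    have x: "4 * t \<le> x" "x < 3/4"
      using Suc below[of k] \<open>0 < c\<close> by (auto simp: x_def intro: order_trans[rotated])
    then have "c \<le> x * (x powr \<gamma> * u (x, 4 ^ Suc k * \<theta>))"
      unfolding c_def using \<open>0 < t\<close> \<open>0 < m\<close> gamma_pos m[of x]
      by (intro mult_mono powr_mono2) auto
    then show ?case
      using Suc x by (simp add: x_def gbranch_def algebra_simps)
  qed simp
  moreover obtain k where "3/4 < real k * c"
    using ex_less_of_nat_mult[OF \<open>0 < c\<close>] by blast
  ultimately show False
    using below[of k] \<open>0 < t\<close> by (smt (verit))
qed

lemma funpow_fmap_eq_xorbit:
  assumes "0 < t" "\<forall>i<j. xorbit \<theta> i t < 3/4"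
  shows "(f ^^ Suc j) (3/4 + t, \<theta>) = (xorbit \<theta> j t, 4 ^ Suc j * \<theta>)"
  using assms(2)
proof (induction j)
  case 0
  then show ?case
    using fmap_right[of "(3/4 + t, \<theta>)"] \<open>0 < t\<close> by simp
next
  case (Suc j)
  then have "xorbit \<theta> j t \<le> 3/4"
    by (simp add: less_imp_le)
  with Suc show ?case
    by (simp add: fmap_left gbranch_def)
qed

text \<open>Choosing the least \<open>j\<close> that can reach \<open>3/4\<close> at all keeps the earlier iterates below \<open>3/4\<close>
  on the whole interval; the intermediate value theorem for the \<open>j\<close>-th one then gives an exact hit.\<close>

lemma xorbit_hits_line:
  assumes "0 < t"
  obtains s j where "0 < s" "s \<le> t" "xorbit \<theta> j s = 3/4" "\<forall>i<j. xorbit \<theta> i s < 3/4"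
proof -
  define P where "P j \<longleftrightarrow> (\<exists>s\<in>{0<..t}. 3/4 \<le> xorbit \<theta> j s)" for j
  obtain k where "3/4 \<le> xorbit \<theta> k t"
    using xorbit_reaches_line[OF assms] by blast
  then have "P k"
    using assms unfolding P_def by force
  then have "\<exists>j. P j" ..
  define j where "j = (LEAST j. P j)"
  obtain s1 where s1: "0 < s1" "s1 \<le> t" "3/4 \<le> xorbit \<theta> j s1"
    using LeastI_ex[OF \<open>\<exists>j. P j\<close>] by (auto simp: P_def j_def)
  have below: "xorbit \<theta> i s < 3/4" if "i < j" "0 < s" "s \<le> t" for i s
    using not_less_Least[of i P] that by (auto simp: P_def j_def not_le)
  obtain s where s: "0 \<le> s" "s \<le> s1" "xorbit \<theta> j s = 3/4"
    using IVT'[of "xorbit \<theta> j" 0 "3/4" s1] s1 xorbit_zero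
      continuous_on_subset[OF continuous_on_xorbit, of "{0..s1}"] by auto
  moreover have "s \<noteq> 0"
    using s(3) xorbit_zero by auto
  ultimately show ?thesis
    using that[of s j] below s1 by auto
qed

lemma Fmap_on_line:
  assumes "fst p = 3/4"
  shows "F p = (edge (snd p), 4 * snd p)"
proof -
  have fp: "f p = (edge (snd p), 4 * snd p)"
    by (simp add: fmap_def assms)
  moreover have "f p \<in> Y"
    using edge_gt[of "snd p"] by (force simp: fp Y_iff)
  then have "ret_time \<gamma> u p = 1"
    by (intro ret_time_eqI) auto
  ultimately show ?thesis
    by (simp add: Fmap_def)
qed

lemma Fmap_discontinuous_on_line:
  assumes "fst p = 3/4"
  shows "\<not> continuous (at p within Y) F"
proof
  assume "continuous (at p within Y) F"
  then obtain \<delta> where "0 < \<delta>" and \<delta>: "\<And>q. q \<in> Y \<Longrightarrow> dist q p < \<delta> \<Longrightarrow> dist (F q) (F p) < 3/16"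
    unfolding continuous_within_eps_delta by (metis zero_less_divide_iff zero_less_numeral)
  define \<theta> where "\<theta> = snd p"
  obtain s j where "0 < s" "s \<le> min (\<delta>/2) (3/16)" and hit: "xorbit \<theta> j s = 3/4"
    and below: "\<forall>i<j. xorbit \<theta> i s < 3/4"
    using xorbit_hits_line[of "min (\<delta>/2) (3/16)"] \<open>0 < \<delta>\<close> by auto
  define q where "q = (3/4 + s, \<theta>)"
  have "q \<in> Y"
    using edge_gt[of "\<theta> / 4"] \<open>s \<le> min (\<delta>/2) (3/16)\<close> \<open>0 < s\<close>
    by (force simp: q_def Y_iff)
  moreover have "dist q p < \<delta>"
    using assms \<open>0 < s\<close> \<open>s \<le> min (\<delta>/2) (3/16)\<close>
    by (cases p) (simp add: q_def \<theta>_def dist_Pair_Pair dist_real_def)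
  ultimately have "dist (F q) (F p) < 3/16"
    by (rule \<delta>)
  have orbit: "(f ^^ Suc i) q = (xorbit \<theta> i s, 4 ^ Suc i * \<theta>)" if "i \<le> j" for i
    using funpow_fmap_eq_xorbit[OF \<open>0 < s\<close>] below that by (simp add: q_def)
  have "ret_time \<gamma> u q = Suc j"
  proof (rule ret_time_eqI)
    show "(f ^^ Suc j) q \<in> Y"
      using orbit[of j] hit line_in_Y by simp
    show "(f ^^ k) q \<notin> Y" if "0 < k" "k < Suc j" for k
      using orbit[of "k - 1"] below that by (cases k) (auto simp: Y_iff)
  qed simp
  then have "fst (F q) = 3/4"
    using orbit[of j] hit by (simp add: Fmap_def)
  moreover have "15/16 < fst (F p)"
    using Fmap_on_line[OF assms] edge_gt by simp
  ultimately have "3/16 < dist (fst (F q)) (fst (F p))"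
    by (simp add: dist_real_def)
  with dist_fst_le \<open>dist (F q) (F p) < 3/16\<close> show False
    by (meson less_trans not_le)
qed

end

lemma standing_imp_intermittent_setting:
  "0 < \<gamma> \<Longrightarrow> \<epsilon> \<le> 1 \<Longrightarrow> standing \<gamma> \<epsilon> u \<Longrightarrow> \<exists>u'. intermittent_setting \<gamma> \<epsilon> u u'"
  unfolding standing_def Let_def intermittent_setting_def by (elim conjE exE) blast

theorem proposition2p1:
  fixes \<gamma> :: real
  assumes "\<gamma> > 0"
  shows "\<exists>\<epsilon>>0. \<forall>u. standing \<gamma> \<epsilon> u \<longrightarrow>
           (\<forall>p\<in>Yset \<gamma> u. (\<exists>n>0. (fmap \<gamma> u ^^ n) p \<in> Yset \<gamma> u) \<longrightarrow>
              (\<forall>D. (Fmap \<gamma> u has_derivative D) (at p within Yset \<gamma> u) \<longrightarrow>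
                   (\<forall>v. 4 * norm v \<le> norm (D v))))"
proof (intro exI[of _ 1] conjI allI impI ballI)
  fix u p D v
  assume "standing \<gamma> 1 u" and p: "p \<in> Yset \<gamma> u" and ret: "\<exists>n>0. (fmap \<gamma> u ^^ n) p \<in> Yset \<gamma> u"
    and D: "(Fmap \<gamma> u has_derivative D) (at p within Yset \<gamma> u)"
  then obtain u' where "intermittent_setting \<gamma> 1 u u'"
    using standing_imp_intermittent_setting assms by blast
  then interpret intermittent_setting \<gamma> 1 u u' .
  have "fst p \<noteq> 3/4"
    using Fmap_discontinuous_on_line has_derivative_continuous[OF D] by blast
  with p have "3/4 < fst p"
    by (simp add: Y_iff)
  then show "4 * norm v \<le> norm (D v)"
    using Fmap_expanding_right p ret D by blast
qed simp

end
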